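(* Let $I$ be an ideal of a metric Hom-Jacobi-Jordan algebra $(J,[\cdot,\cdot],\alpha,B)$. Then (1) $I^{\perp}$ is an ideal of $J$; (2) the centralizer $\mathfrak Z(I)$ of $I$ contains $I^{\perp}$.
   Context: A Hom-Jacobi-Jordan algebra is $(J,[\cdot,\cdot],\alpha)$ with $[\cdot,\cdot]$ symmetric bilinear, $\alpha$ linear and $[\alpha(x),[y,z]]+[\alpha(y),[z,x]]+[\alpha(z),[x,y]]=0$. A metric Hom-Jacobi-Jordan algebra is such an algebra with a nondegenerate symmetric bilinear form $B$ satisfying $B(x,[y,z])=B([x,y],z)$ and $B(\alpha(x),y)=B(x,\alpha(y))$. An ideal is a subspace $I$ with $[x,y]\in I$ and $\alpha(x)\in I$ for all $x\in I$, $y\in J$. $I^\perp=\{x\in J: B(x,y)=0\ \forall y\in I\}$, and $\mathfrak Z(I)=\{x\in J:[x,y]=0\ \forall y\in I\}$. *)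

theory Defs
  imports "HOL.Vector_Spaces"
begin

definition hom_jacobi_jordan ::
  "('k::field \<Rightarrow> 'v::ab_group_add \<Rightarrow> 'v) \<Rightarrow> ('v \<Rightarrow> 'v \<Rightarrow> 'v) \<Rightarrow> ('v \<Rightarrow> 'v) \<Rightarrow> bool" where
  "hom_jacobi_jordan scale br \<alpha> \<longleftrightarrow>
     vector_space scale \<and>
     (\<forall>x. Vector_Spaces.linear scale scale (br x)) \<and>
     (\<forall>y. Vector_Spaces.linear scale scale (\<lambda>x. br x y)) \<and>
     (\<forall>x y. br x y = br y x) \<and>
     Vector_Spaces.linear scale scale \<alpha> \<and>
     (\<forall>x y z. br (\<alpha> x) (br y z) + br (\<alpha> y) (br z x) + br (\<alpha> z) (br x y) = 0)"

definition metric_hom_jacobi_jordan ::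
  "('k::field \<Rightarrow> 'v::ab_group_add \<Rightarrow> 'v) \<Rightarrow> ('v \<Rightarrow> 'v \<Rightarrow> 'v) \<Rightarrow> ('v \<Rightarrow> 'v) \<Rightarrow> ('v \<Rightarrow> 'v \<Rightarrow> 'k) \<Rightarrow> bool" where
  "metric_hom_jacobi_jordan scale br \<alpha> B \<longleftrightarrow>
     hom_jacobi_jordan scale br \<alpha> \<and>
     (\<forall>x. Vector_Spaces.linear scale (*) (B x)) \<and>
     (\<forall>y. Vector_Spaces.linear scale (*) (\<lambda>x. B x y)) \<and>
     (\<forall>x y. B x y = B y x) \<and>
     (\<forall>x. (\<forall>y. B x y = 0) \<longrightarrow> x = 0) \<and>
     (\<forall>x y z. B x (br y z) = B (br x y) z) \<and>
     (\<forall>x y. B (\<alpha> x) y = B x (\<alpha> y))"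

definition hjj_ideal ::
  "('k::field \<Rightarrow> 'v::ab_group_add \<Rightarrow> 'v) \<Rightarrow> ('v \<Rightarrow> 'v \<Rightarrow> 'v) \<Rightarrow> ('v \<Rightarrow> 'v) \<Rightarrow> 'v set \<Rightarrow> bool" where
  "hjj_ideal scale br \<alpha> I \<longleftrightarrow>
     module.subspace scale I \<and> (\<forall>x\<in>I. \<forall>y. br x y \<in> I) \<and> (\<forall>x\<in>I. \<alpha> x \<in> I)"

definition orth :: "('v \<Rightarrow> 'v \<Rightarrow> 'k::zero) \<Rightarrow> 'v set \<Rightarrow> 'v set" where
  "orth B I = {x. \<forall>y\<in>I. B x y = 0}"

definition centralizer :: "('v \<Rightarrow> 'v \<Rightarrow> 'v::zero) \<Rightarrow> 'v set \<Rightarrow> 'v set" where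
  "centralizer br I = {x. \<forall>y\<in>I. br x y = 0}"

end

theory Submission
  imports Defs
begin

text \<open>Invariance of B moves the bracket across the form: B (br x y) z = B x (br y z).
  So if x is orthogonal to I, then br x y is orthogonal to I (as br y z stays in I), and
  br x y for y in I is orthogonal to all of J, hence zero by nondegeneracy.\<close>

lemma subspace_orth:
  assumes "vector_space scale"
    and "\<And>y. Vector_Spaces.linear scale (*) (\<lambda>x. B x y)"
  shows "module.subspace scale (orth B I)"
proof -
  interpret vector_space scale by (fact assms(1))
  have "B 0 y = 0" "B (x + x') y = B x y + B x' y" "B (scale c x) y = c * B x y" for x x' y c
    using linear.axioms(3)[OF assms(2)[of y]]
    by (metis module_hom.zero, metis module_hom.add, metis module_hom.scale)
  then show ?thesis
    unfolding subspace_def orth_def by auto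
qed

lemma orth_bracket_closed:
  assumes invariant: "\<And>x y z. B x (br y z) = B (br x y) z"
    and right_closed: "\<And>y z. z \<in> I \<Longrightarrow> br y z \<in> I"
    and "x \<in> orth B I"
  shows "br x y \<in> orth B I"
  using assms by (auto simp: orth_def simp flip: invariant)

lemma orth_map_closed:
  assumes "\<And>x y. B (\<alpha> x) y = B x (\<alpha> y)"
    and "\<And>x. x \<in> I \<Longrightarrow> \<alpha> x \<in> I"
    and "x \<in> orth B I"
  shows "\<alpha> x \<in> orth B I"
  using assms by (simp add: orth_def)

lemma orth_subset_centralizer:
  assumes nondegenerate: "\<And>x. (\<forall>y. B x y = 0) \<Longrightarrow> x = 0"
    and invariant: "\<And>x y z. B x (br y z) = B (br x y) z"
    and left_closed: "\<And>y z. y \<in> I \<Longrightarrow> br y z \<in> I"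
  shows "orth B I \<subseteq> centralizer br I"
proof
  fix x assume x: "x \<in> orth B I"
  have "br x y = 0" if "y \<in> I" for y
  proof (rule nondegenerate, intro allI)
    fix z
    have "B x (br y z) = 0"
      using x left_closed[OF \<open>y \<in> I\<close>] by (simp add: orth_def)
    then show "B (br x y) z = 0"
      by (simp add: invariant)
  qed
  then show "x \<in> centralizer br I"
    by (simp add: centralizer_def)
qed

theorem proposition6p4:
  fixes scale :: "'k::field \<Rightarrow> 'v::ab_group_add \<Rightarrow> 'v"
    and br :: "'v \<Rightarrow> 'v \<Rightarrow> 'v" and \<alpha> :: "'v \<Rightarrow> 'v" and B :: "'v \<Rightarrow> 'v \<Rightarrow> 'k"
    and I :: "'v set"
  assumes "metric_hom_jacobi_jordan scale br \<alpha> B"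
    and "hjj_ideal scale br \<alpha> I"
  shows "hjj_ideal scale br \<alpha> (orth B I) \<and> orth B I \<subseteq> centralizer br I"
proof -
  have space: "vector_space scale"
    and linear_left: "\<And>y. Vector_Spaces.linear scale (*) (\<lambda>x. B x y)"
    and nondegenerate: "\<And>x. (\<forall>y. B x y = 0) \<Longrightarrow> x = 0"
    and invariant: "\<And>x y z. B x (br y z) = B (br x y) z"
    and \<alpha>_symmetric: "\<And>x y. B (\<alpha> x) y = B x (\<alpha> y)"
    and br_commute: "\<And>x y. br x y = br y x"
    using assms(1) unfolding metric_hom_jacobi_jordan_def hom_jacobi_jordan_def by blast+
  have left_closed: "\<And>y z. y \<in> I \<Longrightarrow> br y z \<in> I"
    and \<alpha>_closed: "\<And>x. x \<in> I \<Longrightarrow> \<alpha> x \<in> I"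
    using assms(2) unfolding hjj_ideal_def by blast+
  have right_closed: "\<And>y z. z \<in> I \<Longrightarrow> br y z \<in> I"
    using left_closed br_commute by metis
  have "hjj_ideal scale br \<alpha> (orth B I)"
    unfolding hjj_ideal_def
    using subspace_orth[where B = B and I = I, OF space linear_left]
      orth_bracket_closed[where B = B and br = br and I = I, OF invariant right_closed]
      orth_map_closed[where B = B and \<alpha> = \<alpha> and I = I, OF \<alpha>_symmetric \<alpha>_closed]
    by blast
  moreover have "orth B I \<subseteq> centralizer br I"
    using orth_subset_centralizer[where B = B and br = br and I = I, OF nondegenerate invariant left_closed] .
  ultimately show ?thesis ..
qed

end
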